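(* Assume $m\ge2$. There exists $g(x)\in A$ with $M_x^T=M_g$ if and only if either $f(x)=x^m\pm1$, or $m=2$ and $f(x)=x^2+ax-1$ for some $a\in\mathbb{F}$.
   Context: Let $\mathbb{F}$ be a finite field, $f(x)=x^m+\sum_{i=0}^{m-1}f_ix^i\in\mathbb{F}[x]$ monic of degree $m$, and $A=\mathbb{F}[x]/\langle f(x)\rangle$, elements identified with polynomials of degree $<m$. $M_x$ is the $m\times m$ companion matrix of $f$: its $i$-th row is the unit vector $e_{i+1}$ for $1\le i\le m-1$ and its last row is $(-f_0,-f_1,\ldots,-f_{m-1})$. For $g(x)=\sum_{i=0}^{m-1}a_ix^i\in A$, $M_g=\sum_{i=0}^{m-1}a_iM_x^i$. $M^T$ denotes the transpose. *)

theory Defs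
  imports "Jordan_Normal_Form.Matrix" "HOL-Computational_Algebra.Polynomial"
begin

definition companion_mat :: "'a::field poly \<Rightarrow> 'a mat" where
  "companion_mat f = (let m = degree f in
     mat m m (\<lambda>(i,j). if i < m - 1 then (if j = i + 1 then 1 else 0) else - coeff f j))"

definition elem_mat :: "'a::field poly \<Rightarrow> 'a poly \<Rightarrow> 'a mat" where
  "elem_mat f g = (let m = degree f in
     mat m m (\<lambda>(i,j). \<Sum>k<m. coeff g k * (companion_mat f ^\<^sub>m k) $$ (i,j)))"

end

theory Submission
  imports Defs
begin

text \<open>Row 0 of M_x^k is the unit vector e_k (k < m), so row 0 of M_g is the coefficient
  vector of g, while row 0 of M_x^T is -f_0 e_{m-1}; hence g = -f_0 x^{m-1} is forced.
  Row 1 of M_x^{m-1} is the last row of M_x, so comparing the second rows of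
  M_x^T = -f_0 M_x^{m-1} gives f_0^2 = 1, f_j = 0 for 0 < j < m - 1 and f_0 f_{m-1} = -f_1,
  which leaves exactly the listed polynomials. Conversely, for x^m + f_0 with f_0^2 = 1
  the identity M_x^T = -f_0 M_x^{m-1} holds, and for x^2 + a x - 1 the matrix M_x is symmetric.\<close>

lemma companion_mat_carrier: "companion_mat f \<in> carrier_mat (degree f) (degree f)"
  by (simp add: companion_mat_def Let_def)

lemma dim_companion_mat [simp]:
  "dim_row (companion_mat f) = degree f" "dim_col (companion_mat f) = degree f"
  by (simp_all add: companion_mat_def Let_def)

lemma index_companion_mat:
  "i < degree f \<Longrightarrow> j < degree f \<Longrightarrow> companion_mat f $$ (i,j) =
     (if i < degree f - 1 then (if j = i + 1 then 1 else 0) else - coeff f j)"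
  by (simp add: companion_mat_def Let_def)

lemma dim_elem_mat [simp]:
  "dim_row (elem_mat f g) = degree f" "dim_col (elem_mat f g) = degree f"
  by (simp_all add: elem_mat_def Let_def)

lemma index_elem_mat:
  "i < degree f \<Longrightarrow> j < degree f \<Longrightarrow>
     elem_mat f g $$ (i,j) = (\<Sum>k<degree f. coeff g k * (companion_mat f ^\<^sub>m k) $$ (i,j))"
  by (simp add: elem_mat_def Let_def)

lemma elem_mat_monom:
  assumes "k < degree f"
  shows "elem_mat f (monom a k) = a \<cdot>\<^sub>m companion_mat f ^\<^sub>m k"
proof (rule eq_matI)
  fix i j assume "i < dim_row (a \<cdot>\<^sub>m companion_mat f ^\<^sub>m k)" "j < dim_col (a \<cdot>\<^sub>m companion_mat f ^\<^sub>m k)"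
  then have "i < degree f" "j < degree f" by (auto split: if_splits)
  then show "elem_mat f (monom a k) $$ (i,j) = (a \<cdot>\<^sub>m companion_mat f ^\<^sub>m k) $$ (i,j)"
    using assms by (simp add: index_elem_mat coeff_monom if_distrib[of "\<lambda>c. c * _"] sum.delta' cong: if_cong)
qed simp_all

lemma pow_mat_Suc_index_unit_row:
  fixes A :: "'a::semiring_1 mat"
  assumes "A \<in> carrier_mat n n" and "i < n" "j < n" "p < n"
    and "\<And>l. l < n \<Longrightarrow> (A ^\<^sub>m k) $$ (i,l) = (if l = p then a else 0)"
  shows "(A ^\<^sub>m Suc k) $$ (i,j) = a * A $$ (p,j)"
proof -
  have "(A ^\<^sub>m Suc k) $$ (i,j) = (\<Sum>l<n. (A ^\<^sub>m k) $$ (i,l) * A $$ (l,j))"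
    using assms(1-3) by (simp add: scalar_prod_def atLeast0LessThan)
  also have "\<dots> = (\<Sum>l<n. if l = p then a * A $$ (l,j) else 0)"
    using assms(5) by (intro sum.cong) auto
  finally show ?thesis
    using assms(4) by simp
qed

lemma companion_mat_pow_upper_row:
  assumes "i + k < degree f" "j < degree f"
  shows "(companion_mat f ^\<^sub>m k) $$ (i,j) = (if j = i + k then 1 else 0)"
  using assms
proof (induction k arbitrary: j)
  case (Suc k)
  then have "(companion_mat f ^\<^sub>m Suc k) $$ (i,j) = 1 * companion_mat f $$ (i + k, j)"
    by (intro pow_mat_Suc_index_unit_row[OF companion_mat_carrier]) auto
  with Suc.prems show ?case
    by (simp add: index_companion_mat)
qed simp

lemma companion_mat_pow_last_row:
  assumes "i + Suc k = degree f" "j < degree f"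
  shows "(companion_mat f ^\<^sub>m Suc k) $$ (i,j) = - coeff f j"
proof -
  have "(companion_mat f ^\<^sub>m Suc k) $$ (i,j) = 1 * companion_mat f $$ (i + k, j)"
    using assms by (intro pow_mat_Suc_index_unit_row[OF companion_mat_carrier])
      (auto simp: companion_mat_pow_upper_row)
  with assms show ?thesis
    by (simp add: index_companion_mat)
qed

lemma companion_mat_pow_binomial_lower_row:
  assumes binomial: "\<And>j. 0 < j \<Longrightarrow> j < degree f \<Longrightarrow> coeff f j = 0"
    and "i < degree f" "d < i" "i + k = degree f + d" "j < degree f"
  shows "(companion_mat f ^\<^sub>m k) $$ (i,j) = (if j = d then - coeff f 0 else 0)"
  using assms(3-5)
proof (induction d arbitrary: k j)
  case 0
  then obtain k' where k: "k = Suc k'" and "i + Suc k' = degree f"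
    using \<open>i < degree f\<close> by (cases k) auto
  then have "(companion_mat f ^\<^sub>m k) $$ (i,j) = - coeff f j"
    unfolding k using 0 by (intro companion_mat_pow_last_row)
  with 0 show ?case
    using binomial[of j] by auto
next
  case (Suc d)
  then obtain k' where k: "k = Suc k'" and "i + k' = degree f + d"
    using \<open>i < degree f\<close> by (cases k) auto
  with Suc have "(companion_mat f ^\<^sub>m k) $$ (i,j) = - coeff f 0 * companion_mat f $$ (d,j)"
    unfolding k using \<open>i < degree f\<close>
    by (intro pow_mat_Suc_index_unit_row[OF companion_mat_carrier]) auto
  with Suc.prems \<open>i < degree f\<close> show ?case
    by (simp add: index_companion_mat)
qed

lemma elem_mat_first_row:
  assumes "k < degree f"
  shows "elem_mat f g $$ (0,k) = coeff g k"
  using assms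
  by (simp add: index_elem_mat companion_mat_pow_upper_row
      if_distrib[of "\<lambda>c. _ * c"] sum.delta cong: if_cong)

lemma transpose_companion_eq_elem_mat_imp_monom:
  assumes "transpose_mat (companion_mat f) = elem_mat f g" and "degree g < degree f"
  shows "g = monom (- coeff f 0) (degree f - 1)"
proof (rule poly_eqI)
  fix k
  show "coeff g k = coeff (monom (- coeff f 0) (degree f - 1)) k"
  proof (cases "k < degree f")
    case True
    then have "coeff g k = transpose_mat (companion_mat f) $$ (0,k)"
      using assms(1) by (simp add: elem_mat_first_row)
    also have "\<dots> = companion_mat f $$ (k,0)"
      using True by simp
    finally show ?thesis
      using True by (auto simp: index_companion_mat coeff_monom)
  next
    case False
    with assms(2) show ?thesis
      by (simp add: coeff_eq_0 coeff_monom)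
  qed
qed

lemma transpose_companion_eq_smult_pow_second_row:
  assumes "transpose_mat (companion_mat f) = c \<cdot>\<^sub>m companion_mat f ^\<^sub>m (degree f - 1)"
    and "2 \<le> degree f" and "j < degree f"
  shows "c * - coeff f j = (if j < degree f - 1 then (if j = 0 then 1 else 0) else - coeff f 1)"
proof -
  have "degree f - 1 = Suc (degree f - 2)" and "1 + Suc (degree f - 2) = degree f"
    using assms(2) by arith+
  then have "(companion_mat f ^\<^sub>m (degree f - 1)) $$ (1,j) = - coeff f j"
    using assms(3) by (metis companion_mat_pow_last_row)
  then have "c * - coeff f j = transpose_mat (companion_mat f) $$ (1,j)"
    using assms by simp
  also have "\<dots> = companion_mat f $$ (j,1)"
    using assms(2,3) by simp
  finally show ?thesis
    using assms(2,3) by (auto simp: index_companion_mat)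
qed

lemma monic_eq_monom_plus_const:
  fixes f :: "'a::field poly"
  assumes "lead_coeff f = 1" and "0 < degree f"
    and "\<And>j. 0 < j \<Longrightarrow> j < degree f \<Longrightarrow> coeff f j = 0"
  shows "f = monom 1 (degree f) + [:coeff f 0:]"
proof (rule poly_eqI)
  fix n
  show "coeff f n = coeff (monom 1 (degree f) + [:coeff f 0:]) n"
    using assms coeff_eq_0[of f n]
    by (cases "n = 0"; cases "n < degree f"; cases "n = degree f")
      (auto simp: coeff_monom coeff_pCons split: nat.splits)
qed

lemma monic_classification:
  fixes f :: "'a::field poly"
  assumes "lead_coeff f = 1" and m: "degree f = m" "2 \<le> m"
    and first: "\<And>j. j < m - 1 \<Longrightarrow> coeff f 0 * coeff f j = (if j = 0 then 1 else 0)"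
    and last: "coeff f 0 * coeff f (m - 1) = - coeff f 1"
  shows "f = monom 1 m + 1 \<or> f = monom 1 m - 1 \<or> (m = 2 \<and> (\<exists>a. f = [:-1, a, 1:]))"
proof -
  define c where "c = coeff f 0"
  have "c * c = 1"
    using first[of 0] m by (simp add: c_def)
  then have c: "c = 1 \<or> c = -1"
    by (simp add: square_eq_1_iff)
  have middle: "coeff f j = 0" if "0 < j" "j < m - 1" for j
    using first[of j] that c by (auto simp: c_def)
  show ?thesis
  proof (cases "m = 2")
    case True
    define a where "a = coeff f 1"
    have "f = [:c, a, 1:]"
    proof (rule poly_eqI)
      fix n
      show "coeff f n = coeff [:c, a, 1:] n"
        using assms(1) m True coeff_eq_0[of f n]
        by (auto simp: c_def a_def coeff_pCons numeral_2_eq_2 split: nat.split)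
    qed
    moreover have "c = -1" if "a \<noteq> 0"
      \<comment> \<open>for \<open>c = 1\<close> we get \<open>2 a = 0\<close>, so the characteristic is 2 and \<open>1 = -1\<close>\<close>
    proof -
      have "(1 + 1) * a = 0" if "c = 1"
        using last that True by (simp add: c_def a_def algebra_simps eq_neg_iff_add_eq_0)
      then show ?thesis
        using c \<open>a \<noteq> 0\<close> by (auto simp: eq_neg_iff_add_eq_0)
    qed
    ultimately show ?thesis
      using c True by (cases "a = 0") (auto simp: monom_Suc one_pCons numeral_2_eq_2)
  next
    case False
    then have "coeff f 1 = 0"
      using middle[of 1] m by simp
    then have "coeff f (m - 1) = 0"
      using last c by (auto simp: c_def)
    with middle have "coeff f j = 0" if "0 < j" "j < degree f" for j
      using that m by (cases "j = m - 1") auto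
    then have "f = monom 1 m + [:c:]"
      using monic_eq_monom_plus_const[OF assms(1)] m by (simp add: c_def)
    with c show ?thesis
      by (auto simp: one_pCons)
  qed
qed

lemma transpose_companion_binomial:
  assumes binomial: "\<And>j. 0 < j \<Longrightarrow> j < degree f \<Longrightarrow> coeff f j = 0"
    and "coeff f 0 * coeff f 0 = 1" and "0 < degree f"
  shows "transpose_mat (companion_mat f) = elem_mat f (monom (- coeff f 0) (degree f - 1))"
proof (rule eq_matI)
  fix i j assume "i < dim_row (elem_mat f (monom (- coeff f 0) (degree f - 1)))"
    "j < dim_col (elem_mat f (monom (- coeff f 0) (degree f - 1)))"
  then have i: "i < degree f" and j: "j < degree f" by auto
  have "(companion_mat f ^\<^sub>m (degree f - 1)) $$ (i,j) =
      (if i = 0 then (if j = degree f - 1 then 1 else 0)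
       else (if j = i - 1 then - coeff f 0 else 0))"
  proof (cases "i = 0")
    case True
    then show ?thesis
      using j by (simp add: companion_mat_pow_upper_row)
  next
    case False
    then show ?thesis
      using companion_mat_pow_binomial_lower_row[OF binomial i, of "i - 1" "degree f - 1" j] j
      by simp
  qed
  then show "transpose_mat (companion_mat f) $$ (i,j) =
      elem_mat f (monom (- coeff f 0) (degree f - 1)) $$ (i,j)"
    using i j assms by (auto simp: elem_mat_monom index_companion_mat)
qed auto

lemma symmetric_companion_quadratic:
  assumes "degree f = 2" and "coeff f 0 = -1"
  shows "transpose_mat (companion_mat f) = elem_mat f (monom 1 1)"
proof (rule eq_matI)
  fix i j assume "i < dim_row (elem_mat f (monom 1 1))" "j < dim_col (elem_mat f (monom 1 1))"
  then have "i < 2" "j < 2"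
    using assms by auto
  then show "transpose_mat (companion_mat f) $$ (i,j) = elem_mat f (monom 1 1) $$ (i,j)"
    using assms companion_mat_carrier[of f]
    by (auto simp: elem_mat_monom index_companion_mat less_2_cases_iff)
qed (use assms in auto)

theorem mainTheorem12:
  fixes f :: "'a::{field,finite} poly" and m :: nat
  assumes "lead_coeff f = 1" and "degree f = m" and "m \<ge> 2"
  shows "(\<exists>g :: 'a poly. degree g < m \<and> transpose_mat (companion_mat f) = elem_mat f g)
     \<longleftrightarrow> (f = monom 1 m + 1 \<or> f = monom 1 m - 1 \<or> (m = 2 \<and> (\<exists>a. f = [:-1, a, 1:])))"
proof
  assume "\<exists>g. degree g < m \<and> transpose_mat (companion_mat f) = elem_mat f g"
  then obtain g where "degree g < m" and eq: "transpose_mat (companion_mat f) = elem_mat f g"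
    by blast
  then have "transpose_mat (companion_mat f) = - coeff f 0 \<cdot>\<^sub>m companion_mat f ^\<^sub>m (m - 1)"
    using assms transpose_companion_eq_elem_mat_imp_monom[OF eq] by (simp add: elem_mat_monom)
  from transpose_companion_eq_smult_pow_second_row[OF this[folded \<open>degree f = m\<close>]] assms
  show "f = monom 1 m + 1 \<or> f = monom 1 m - 1 \<or> (m = 2 \<and> (\<exists>a. f = [:-1, a, 1:]))"
    by (intro monic_classification) auto
next
  have binomial: "\<exists>g. degree g < m \<and> transpose_mat (companion_mat f) = elem_mat f g"
    if "f = monom 1 m + [:c:]" and "c * c = 1" for c
  proof (intro exI conjI)
    show "degree (monom (- coeff f 0) (m - 1)) < m"
      using degree_monom_le[of "- coeff f 0" "m - 1"] assms(3) by linarith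
    show "transpose_mat (companion_mat f) = elem_mat f (monom (- coeff f 0) (m - 1))"
      using transpose_companion_binomial[of f] that assms
      by (auto simp: coeff_monom coeff_pCons split: nat.split)
  qed
  assume "f = monom 1 m + 1 \<or> f = monom 1 m - 1 \<or> (m = 2 \<and> (\<exists>a. f = [:-1, a, 1:]))"
  then show "\<exists>g. degree g < m \<and> transpose_mat (companion_mat f) = elem_mat f g"
  proof (elim disjE conjE exE)
    assume "f = monom 1 m + 1"
    then show ?thesis
      by (intro binomial[of 1]) (simp_all add: one_pCons)
  next
    assume "f = monom 1 m - 1"
    then show ?thesis
      by (intro binomial[of "-1"]) (simp_all add: one_pCons diff_conv_add_uminus)
  next
    fix a assume "m = 2" "f = [:-1, a, 1:]"
    then show ?thesis
      using symmetric_companion_quadratic[of f]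
      by (intro exI[of _ "monom 1 1"]) (simp add: degree_monom_eq)
  qed
qed

end
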